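(* The filter $\mathscr F^{\mathrm{1cas}}_{\rho}$ is a normal filter of subgroups of $\mathscr G^{\mathrm{1cas}}_{\rho}$ (i.e. it is closed under conjugation by elements of $\mathscr G^{\mathrm{1cas}}_{\rho}$).
   Context: $\rho:\omega_1\setminus\{0\}\to\omega_1$ is a regressive map, $\operatorname{Succ}_\rho(\xi)=\{\eta:\rho(\eta)=\xi\}$, $\operatorname{cl}_\rho(A)$ the least superset of $A$ closed under $\rho$. $\mathbb P_1=\operatorname{Fn}(\omega_1\times\omega\times\omega,2,{<}\omega)$. For $\xi<\omega_1$, $i<\omega$, $s\subseteq\omega$ finite or cofinite, $\tau^{\mathrm{1cas}}_{\xi,i,s}$ is the automorphism of $\mathbb P_1$ flipping the value of a condition at each coordinate $(\zeta,i,n)$ with $n\in s$ and $\zeta\in\{\xi\}\cup\operatorname{Succ}_\rho(\xi)$. $\mathscr G^{\mathrm{1cas}}_\rho$ is the group generated by these automorphisms. For $A\subseteq\omega_1$, $\operatorname{Fix}^{\mathrm{1cas}}_\rho(A)$ is the subgroup of elements acting trivially on all coordinates $(\zeta,j,n)$ with $\zeta\in\operatorname{cl}_\rho(A)$. $\mathscr F^{\mathrm{1cas}}_\rho$ is the filter of subgroups generated by the $\operatorname{Fix}^{\mathrm{1cas}}_\rho(A)$ for countable $A\subseteq\omega_1$. *)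

theory Defs
  imports Main "HOL-Library.Countable_Set" "HOL-Algebra.Bij" "HOL-Algebra.Generated_Groups"
begin

text \<open>omega_1 is modelled by a well-ordered type 'a which is uncountable while all its
  proper initial segments are countable (this characterises omega_1 up to isomorphism).
  Its least element plays the role of the ordinal 0.\<close>

definition is_omega1_type :: "'a::wellorder itself \<Rightarrow> bool" where
  "is_omega1_type _ \<longleftrightarrow> \<not> countable (UNIV :: 'a set) \<and> (\<forall>x::'a. countable {y. y < x})"

definition ord0 :: "'a::wellorder" where
  "ord0 = (LEAST x. True)"

definition regressive :: "('a::wellorder \<Rightarrow> 'a) \<Rightarrow> bool" where
  "regressive \<rho> \<longleftrightarrow> (\<forall>\<eta>. \<eta> \<noteq> ord0 \<longrightarrow> \<rho> \<eta> < \<eta>)"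

definition Succ :: "('a::wellorder \<Rightarrow> 'a) \<Rightarrow> 'a \<Rightarrow> 'a set" where
  "Succ \<rho> \<xi> = {\<eta>. \<eta> \<noteq> ord0 \<and> \<rho> \<eta> = \<xi>}"

inductive_set cl :: "('a::wellorder \<Rightarrow> 'a) \<Rightarrow> 'a set \<Rightarrow> 'a set" for \<rho> A where
  base: "\<xi> \<in> A \<Longrightarrow> \<xi> \<in> cl \<rho> A"
| step: "\<eta> \<in> cl \<rho> A \<Longrightarrow> \<eta> \<noteq> ord0 \<Longrightarrow> \<rho> \<eta> \<in> cl \<rho> A"

text \<open>Conditions of P_1 = Fn(omega_1 x omega x omega, 2, <omega): finite partial functions.\<close>
type_synonym 'a cond = "('a \<times> nat \<times> nat) \<Rightarrow> bool option"

definition P1 :: "'a cond set" where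
  "P1 = {p. finite (dom p)}"

definition tau :: "('a::wellorder \<Rightarrow> 'a) \<Rightarrow> 'a \<Rightarrow> nat \<Rightarrow> nat set \<Rightarrow> 'a cond \<Rightarrow> 'a cond" where
  "tau \<rho> \<xi> i s = (\<lambda>p \<in> P1. \<lambda>(\<zeta>, j, n).
      if j = i \<and> n \<in> s \<and> \<zeta> \<in> {\<xi>} \<union> Succ \<rho> \<xi> then map_option Not (p (\<zeta>, j, n)) else p (\<zeta>, j, n))"

definition gens :: "('a::wellorder \<Rightarrow> 'a) \<Rightarrow> ('a cond \<Rightarrow> 'a cond) set" where
  "gens \<rho> = {tau \<rho> \<xi> i s | \<xi> i s. finite s \<or> finite (- s)}"

text \<open>G^1cas_rho: the subgroup of the automorphism (bijection) group of P_1 generated by the taus.\<close>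
definition Gcas :: "('a::wellorder \<Rightarrow> 'a) \<Rightarrow> ('a cond \<Rightarrow> 'a cond) monoid" where
  "Gcas \<rho> = (BijGroup P1) \<lparr>carrier := generate (BijGroup P1) (gens \<rho>)\<rparr>"

definition Fix :: "('a::wellorder \<Rightarrow> 'a) \<Rightarrow> 'a set \<Rightarrow> ('a cond \<Rightarrow> 'a cond) set" where
  "Fix \<rho> A = {g \<in> carrier (Gcas \<rho>). \<forall>p \<in> P1. \<forall>\<zeta> \<in> cl \<rho> A. \<forall>j n. g p (\<zeta>, j, n) = p (\<zeta>, j, n)}"

definition Fcas :: "('a::wellorder \<Rightarrow> 'a) \<Rightarrow> ('a cond \<Rightarrow> 'a cond) set set" where
  "Fcas \<rho> = {H. subgroup H (Gcas \<rho>) \<and>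
     (\<exists>\<A>. finite \<A> \<and> (\<forall>A \<in> \<A>. countable A) \<and> carrier (Gcas \<rho>) \<inter> \<Inter> (Fix \<rho> ` \<A>) \<subseteq> H)}"

definition normal_filter :: "('g, 'b) monoid_scheme \<Rightarrow> 'g set set \<Rightarrow> bool" where
  "normal_filter G F \<longleftrightarrow>
     (\<forall>H \<in> F. subgroup H G) \<and> carrier G \<in> F \<and>
     (\<forall>H \<in> F. \<forall>K \<in> F. H \<inter> K \<in> F) \<and>
     (\<forall>H \<in> F. \<forall>K. subgroup K G \<and> H \<subseteq> K \<longrightarrow> K \<in> F) \<and>
     (\<forall>g \<in> carrier G. \<forall>H \<in> F. {g \<otimes>\<^bsub>G\<^esub> h \<otimes>\<^bsub>G\<^esub> inv\<^bsub>G\<^esub> g | h. h \<in> H} \<in> F)"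

end

theory Submission
  imports Defs
begin

text \<open>Every generator \<open>\<tau>\<close> flips all values of a condition on a fixed set of coordinates.
  Flips compose by symmetric difference of their coordinate sets, so the generated group
  consists of flips only and is abelian; conjugation then acts trivially on subgroups and
  normality of the filter reduces to its filter properties.\<close>

definition flip_on :: "('a \<times> nat \<times> nat) set \<Rightarrow> 'a cond \<Rightarrow> 'a cond" where
  "flip_on S = (\<lambda>p \<in> P1. \<lambda>x. if x \<in> S then map_option Not (p x) else p x)"

lemma tau_eq_flip_on:
  "tau \<rho> \<xi> i s = flip_on {(\<zeta>, j, n). j = i \<and> n \<in> s \<and> \<zeta> \<in> {\<xi>} \<union> Succ \<rho> \<xi>}"
  unfolding tau_def flip_on_def by (intro restrict_ext ext) (auto split: prod.split)

lemma flip_on_in_P1: "p \<in> P1 \<Longrightarrow> flip_on S p \<in> P1"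
  by (simp add: flip_on_def P1_def dom_def)

lemma flip_on_apply:
  "p \<in> P1 \<Longrightarrow> flip_on S p x = (if x \<in> S then map_option Not (p x) else p x)"
  by (simp add: flip_on_def)

lemma flip_on_flip_on: "p \<in> P1 \<Longrightarrow> flip_on S (flip_on T p) = flip_on (sym_diff S T) p"
  by (auto simp: flip_on_apply flip_on_in_P1 option.map_comp o_def option.map_ident)

lemma flip_on_empty: "p \<in> P1 \<Longrightarrow> flip_on {} p = p"
  by (auto simp: flip_on_apply)

lemma flip_on_in_Bij: "flip_on S \<in> Bij P1"
proof -
  have "bij_betw (flip_on S) P1 P1"
    by (rule bij_betw_byWitness[where f'="flip_on S"])
      (auto simp: flip_on_in_P1 flip_on_flip_on flip_on_empty)
  then show ?thesis by (simp add: Bij_def flip_on_def)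
qed

lemma BijGroup_mult_flip_on:
  "flip_on S \<otimes>\<^bsub>BijGroup P1\<^esub> flip_on T = flip_on (sym_diff S T)"
proof
  fix p
  have "(flip_on S \<otimes>\<^bsub>BijGroup P1\<^esub> flip_on T) p =
      (if p \<in> P1 then flip_on S (flip_on T p) else undefined)"
    using flip_on_in_Bij[of S] flip_on_in_Bij[of T] by (simp add: BijGroup_def compose_def)
  also have "\<dots> = flip_on (sym_diff S T) p"
    by (simp add: flip_on_flip_on) (simp add: flip_on_def)
  finally show "(flip_on S \<otimes>\<^bsub>BijGroup P1\<^esub> flip_on T) p = flip_on (sym_diff S T) p" .
qed

lemma BijGroup_one_eq_flip_on: "\<one>\<^bsub>BijGroup P1\<^esub> = flip_on {}"
  by (auto simp: BijGroup_def flip_on_def)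

lemma BijGroup_inv_flip_on: "inv\<^bsub>BijGroup P1\<^esub> (flip_on S) = flip_on S"
proof (rule group.inv_equality[OF group_BijGroup])
  show "flip_on S \<otimes>\<^bsub>BijGroup P1\<^esub> flip_on S = \<one>\<^bsub>BijGroup P1\<^esub>"
    by (simp add: BijGroup_mult_flip_on BijGroup_one_eq_flip_on)
qed (simp_all add: BijGroup_def flip_on_in_Bij)

lemma generate_gens_flip_on:
  assumes "g \<in> generate (BijGroup P1) (gens \<rho>)"
  obtains S where "g = flip_on S"
  using assms
proof (induction arbitrary: thesis)
  case one
  then show ?case using BijGroup_one_eq_flip_on by blast
next
  case (incl h)
  then show ?case by (auto simp: gens_def tau_eq_flip_on)
next
  case (inv h)
  then show ?case by (auto simp: gens_def tau_eq_flip_on BijGroup_inv_flip_on)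
next
  case (eng h1 h2)
  then show ?case by (metis BijGroup_mult_flip_on)
qed

lemma comm_group_Gcas: "comm_group (Gcas \<rho>)"
proof -
  have gens: "gens \<rho> \<subseteq> carrier (BijGroup P1)"
    by (auto simp: gens_def tau_eq_flip_on BijGroup_def flip_on_in_Bij)
  have "group (Gcas \<rho>)"
    unfolding Gcas_def
    by (rule group.subgroup_imp_group[OF group_BijGroup
          group.generate_is_subgroup[OF group_BijGroup gens]])
  moreover have "g \<otimes>\<^bsub>Gcas \<rho>\<^esub> h = h \<otimes>\<^bsub>Gcas \<rho>\<^esub> g"
    if "g \<in> carrier (Gcas \<rho>)" "h \<in> carrier (Gcas \<rho>)" for g h
    using that unfolding Gcas_def
    by (auto elim!: generate_gens_flip_on simp: BijGroup_mult_flip_on Un_commute)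
  ultimately show ?thesis by (rule group.group_comm_groupI)
qed

lemma (in comm_group) conjugates_eq:
  assumes "subgroup H G" and "g \<in> carrier G"
  shows "{g \<otimes> h \<otimes> inv g | h. h \<in> H} = H"
proof -
  have "g \<otimes> h \<otimes> inv g = h" if "h \<in> H" for h
    using subgroup.mem_carrier[OF assms(1) that] assms(2) by (simp add: m_comm[of g h] m_assoc)
  then show ?thesis by (simp add: Setcompr_eq_image)
qed

lemma normal_filter_comm_groupI:
  assumes "comm_group G"
    and subgroup: "\<And>H. H \<in> F \<Longrightarrow> subgroup H G"
    and "carrier G \<in> F"
    and "\<And>H K. H \<in> F \<Longrightarrow> K \<in> F \<Longrightarrow> H \<inter> K \<in> F"
    and "\<And>H K. H \<in> F \<Longrightarrow> subgroup K G \<Longrightarrow> H \<subseteq> K \<Longrightarrow> K \<in> F"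
  shows "normal_filter G F"
proof -
  have conjugate: "{g \<otimes>\<^bsub>G\<^esub> h \<otimes>\<^bsub>G\<^esub> inv\<^bsub>G\<^esub> g | h. h \<in> H} \<in> F"
    if "g \<in> carrier G" "H \<in> F" for g H
    using comm_group.conjugates_eq[OF assms(1) subgroup that(1)] that(2) by simp
  show ?thesis
    unfolding normal_filter_def using conjugate assms(3) by (auto intro: subgroup assms(4,5))
qed

lemma subgroup_of_Fcas: "H \<in> Fcas \<rho> \<Longrightarrow> subgroup H (Gcas \<rho>)"
  by (simp add: Fcas_def)

lemma carrier_Gcas_in_Fcas: "carrier (Gcas \<rho>) \<in> Fcas \<rho>"
proof -
  interpret comm_group "Gcas \<rho>" by (rule comm_group_Gcas)
  have "subgroup (carrier (Gcas \<rho>)) (Gcas \<rho>)" by (rule subgroup_self)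
  moreover have "finite ({} :: 'a set set)" by simp
  ultimately show ?thesis unfolding Fcas_def mem_Collect_eq by blast
qed

lemma Int_in_Fcas:
  assumes "H \<in> Fcas \<rho>" and "K \<in> Fcas \<rho>"
  shows "H \<inter> K \<in> Fcas \<rho>"
proof -
  obtain \<A> where \<A>: "finite \<A>" "\<forall>A \<in> \<A>. countable A"
      "carrier (Gcas \<rho>) \<inter> \<Inter> (Fix \<rho> ` \<A>) \<subseteq> H"
    using assms(1) unfolding Fcas_def mem_Collect_eq by blast
  obtain \<B> where \<B>: "finite \<B>" "\<forall>B \<in> \<B>. countable B"
      "carrier (Gcas \<rho>) \<inter> \<Inter> (Fix \<rho> ` \<B>) \<subseteq> K"
    using assms(2) unfolding Fcas_def mem_Collect_eq by blast
  interpret comm_group "Gcas \<rho>" by (rule comm_group_Gcas)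
  have "subgroup (H \<inter> K) (Gcas \<rho>)"
    using subgroup_of_Fcas[OF assms(1)] subgroup_of_Fcas[OF assms(2)] by (rule subgroups_Inter_pair)
  moreover have "finite (\<A> \<union> \<B>)" and "\<forall>A \<in> \<A> \<union> \<B>. countable A"
    using \<A> \<B> by auto
  moreover have "carrier (Gcas \<rho>) \<inter> \<Inter> (Fix \<rho> ` (\<A> \<union> \<B>)) \<subseteq> H \<inter> K"
    using \<A>(3) \<B>(3) by blast
  ultimately show ?thesis unfolding Fcas_def mem_Collect_eq by blast
qed

lemma Fcas_upward_closed:
  "H \<in> Fcas \<rho> \<Longrightarrow> subgroup K (Gcas \<rho>) \<Longrightarrow> H \<subseteq> K \<Longrightarrow> K \<in> Fcas \<rho>"
  unfolding Fcas_def mem_Collect_eq by (meson subset_trans)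

theorem proposition2p8:
  fixes \<rho> :: "'a::wellorder \<Rightarrow> 'a"
  assumes "is_omega1_type TYPE('a)"
    and "regressive \<rho>"
  shows "normal_filter (Gcas \<rho>) (Fcas \<rho>)"
  using comm_group_Gcas subgroup_of_Fcas carrier_Gcas_in_Fcas Int_in_Fcas Fcas_upward_closed
  by (rule normal_filter_comm_groupI)

end
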